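(* Let $F,G:\mathbb{F}_{2^n}\to\mathbb{F}_{2^n}$ be extended-affine (EA) equivalent, i.e. CCZ-equivalent via an affine permutation $\mathcal{A}(u)=\begin{pmatrix}\mathcal{A}_{11}&0\\ \mathcal{A}_{21}&\mathcal{A}_{22}\end{pmatrix}u+\begin{pmatrix}C\\ D\end{pmatrix}$ of $\mathbb{F}_{2^n}\times\mathbb{F}_{2^n}$ with $\{(x,G(x)):x\in\mathbb{F}_{2^n}\}=\{\mathcal{A}(x,F(x)):x\in\mathbb{F}_{2^n}\}$. Then for all $a,b,c\in\mathbb{F}_{2^n}$, $$\mathrm{LBCT}_F(a,b,c)=\mathrm{LBCT}_G(\mathcal{A}_{11}a,\ \mathcal{A}_{11}b,\ \mathcal{A}_{22}c+\mathcal{A}_{21}b),$$ and the map $(a,b,c)\mapsto(\mathcal{A}_{11}a,\mathcal{A}_{11}b,\mathcal{A}_{22}c+\mathcal{A}_{21}b)$ is a bijection of $\mathbb{F}_{2^n}^3$; hence the LBCT spectrum is preserved under EA-equivalence.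
   Context: Elements of $\mathbb{F}_{2^n}$ are identified with vectors of $\mathbb{F}_2^n$; $\mathcal{A}_{ij}$ are $\mathbb{F}_2$-linear maps of $\mathbb{F}_{2^n}$, $C,D\in\mathbb{F}_{2^n}$, and $\mathcal{A}$ is bijective. For any function $H:\mathbb{F}_{2^n}\to\mathbb{F}_{2^n}$, $$\mathrm{LBCT}_H(a,b,c)=\left|\left\{X\in\mathbb{F}_{2^n} : \exists\,Y\in\mathbb{F}_{2^n}\text{ with } X+Y=b,\ H(X+a)+H(Y+a)=c,\ H(X)+H(Y)=c\right\}\right|.$$ *)

theory Defs
  imports Main
begin

text \<open>F_2-linear map of a field of characteristic 2, viewed as an F_2-vector space:
  scalars are only 0 and 1, so F_2-linearity is exactly additivity.\<close>
definition f2_linear :: "('a::field \<Rightarrow> 'a) \<Rightarrow> bool" where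
  "f2_linear L \<longleftrightarrow> (\<forall>x y. L (x + y) = L x + L y)"

definition LBCT :: "('a::field \<Rightarrow> 'a) \<Rightarrow> 'a \<Rightarrow> 'a \<Rightarrow> 'a \<Rightarrow> nat" where
  "LBCT H a b c = card {X. \<exists>Y. X + Y = b \<and> H (X + a) + H (Y + a) = c \<and> H X + H Y = c}"

end

theory Submission
  imports Defs
begin

text \<open>EA-equivalence means \<open>G (A11 x + C) = A22 (F x) + A21 x + D\<close>. Both conditions in the
  definition of LBCT compare the sum of \<open>H\<close> at two points \<open>u, v\<close> with \<open>u + v = b\<close>. Precomposing
  with the affine bijection \<open>x \<mapsto> A11 x + C\<close> only transports the parameters \<open>a, b\<close> by \<open>A11\<close>, while on
  the output side the constants \<open>D\<close> cancel in characteristic 2 and the linear part contributes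
  \<open>A21 (u + v) = A21 b\<close>; since \<open>A22\<close> is injective the conditions for \<open>F\<close> and \<open>G\<close> coincide.\<close>

lemma CHAR_2_two_eq_zero:
  "CHAR('a::semiring_1) = 2 \<Longrightarrow> (2::'a) = 0"
  by (metis of_nat_CHAR of_nat_numeral)

lemma f2_linear_add:
  "f2_linear L \<Longrightarrow> L (x + y) = L x + L y"
  by (simp add: f2_linear_def)

lemma ex_surj_iff:
  "surj h \<Longrightarrow> (\<exists>y. P y) \<longleftrightarrow> (\<exists>x. P (h x))"
  by (metis surjD)

lemma LBCT_comp_affine:
  fixes H L :: "'a::field \<Rightarrow> 'a"
  assumes char2: "CHAR('a) = 2" and L: "f2_linear L" "bij L"
  shows "LBCT (\<lambda>x. H (L x + C)) a b c = LBCT H (L a) (L b) c"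
proof -
  define h where "h x = L x + C" for x
  have "h (inv L (y - C)) = y" for y
    using surj_f_inv_f[OF bij_is_surj[OF L(2)], of "y - C"] by (simp add: h_def)
  then have "surj h"
    by (rule surjI)
  have "inj h"
    using bij_is_inj[OF L(2)] by (simp add: h_def inj_def)
  have sum: "h X + h Y = L b \<longleftrightarrow> X + Y = b" for X Y
  proof -
    have "h X + h Y = L (X + Y)"
      by (simp add: h_def f2_linear_add[OF L(1)] algebra_simps CHAR_2_two_eq_zero[OF char2])
    then show ?thesis
      using bij_is_inj[OF L(2)] by (auto dest: injD)
  qed
  have shift: "h X + L a = h (X + a)" for X
    by (simp add: h_def f2_linear_add[OF L(1)] algebra_simps)
  let ?S = "{X'. \<exists>Y'. X' + Y' = L b \<and> H (X' + L a) + H (Y' + L a) = c \<and> H X' + H Y' = c}"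
  have "h X \<in> ?S \<longleftrightarrow>
      (\<exists>Y. h X + h Y = L b \<and> H (h X + L a) + H (h Y + L a) = c \<and> H (h X) + H (h Y) = c)" for X
    using ex_surj_iff[OF \<open>surj h\<close>] by simp
  then have "h -` ?S =
      {X. \<exists>Y. X + Y = b \<and> H (h (X + a)) + H (h (Y + a)) = c \<and> H (h X) + H (h Y) = c}"
    by (simp only: sum shift vimage_def mem_Collect_eq)
  moreover have "card (h -` ?S) = card ?S"
    using \<open>inj h\<close> \<open>surj h\<close> by (intro card_vimage_inj) auto
  ultimately show ?thesis
    by (simp add: LBCT_def h_def)
qed

lemma LBCT_affine_output:
  fixes H M N :: "'a::field \<Rightarrow> 'a"
  assumes char2: "CHAR('a) = 2" and M: "f2_linear M" "inj M" and N: "f2_linear N"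
  shows "LBCT (\<lambda>x. M (H x) + N x + D) a b (M c + N b) = LBCT H a b c"
proof -
  have key: "(M (H u) + N u + D) + (M (H v) + N v + D) = M c + N b \<longleftrightarrow> H u + H v = c"
    if "u + v = b" for u v
  proof -
    have "(M (H u) + N u + D) + (M (H v) + N v + D) = M (H u + H v) + N b"
      using that
      by (simp add: CHAR_2_two_eq_zero[OF char2] f2_linear_add[OF M(1)]
          f2_linear_add[OF N, symmetric] algebra_simps)
    then show ?thesis
      using M(2) by (auto dest: injD)
  qed
  have shifted: "(X + a) + (Y + a) = b" if "X + Y = b" for X Y
    using that by (simp add: algebra_simps CHAR_2_two_eq_zero[OF char2])
  show ?thesis
    unfolding LBCT_def by (rule arg_cong[where f = card], intro Collect_cong ex_cong1) (metis key shifted)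
qed

lemma bij_lower_triangular_imp_surj:
  fixes P :: "'a \<Rightarrow> 'b::ab_group_add" and R :: "'c \<Rightarrow> 'd::ab_group_add"
  assumes "bij (\<lambda>(x, y). (P x + C, Q x + R y + D))"
  shows "surj P"
  unfolding surj_def
proof
  fix u
  obtain x y where "(u + C, 0) = (P x + C, Q x + R y + D)"
    using surjD[OF bij_is_surj[OF assms], of "(u + C, 0)"] by auto
  then show "\<exists>x. u = P x"
    by auto
qed

lemma bij_lower_triangular_imp_inj:
  fixes P :: "'a::zero \<Rightarrow> 'b::ab_group_add" and R :: "'c \<Rightarrow> 'd::ab_group_add"
  assumes "bij (\<lambda>(x, y). (P x + C, Q x + R y + D))"
  shows "inj R"
proof (rule injI)
  fix y y'
  assume "R y = R y'"
  then have "(\<lambda>(x, y). (P x + C, Q x + R y + D)) (0, y) = (\<lambda>(x, y). (P x + C, Q x + R y + D)) (0, y')"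
    by simp
  with bij_is_inj[OF assms] have "(0::'a, y) = (0, y')"
    by (rule injD)
  then show "y = y'"
    by simp
qed

lemma bij_triangular_triple:
  fixes P R Q :: "'a::{finite,cancel_semigroup_add} \<Rightarrow> 'a"
  assumes "inj P" "inj R"
  shows "bij (\<lambda>(a, b, c). (P a, P b, R c + Q b))"
proof -
  have "inj (\<lambda>(a, b, c). (P a, P b, R c + Q b))"
    unfolding inj_def
  proof (clarify)
    fix a b c a' b' c'
    assume "P a = P a'" "P b = P b'" and eq: "R c + Q b = R c' + Q b'"
    then have "a = a'" "b = b'"
      using assms(1) by (auto dest: injD)
    with eq have "R c = R c'"
      by simp
    with \<open>a = a'\<close> \<open>b = b'\<close> show "a = a' \<and> (b, c) = (b', c')"
      using assms(2) by (auto dest: injD)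
  qed
  then show ?thesis
    by (simp add: bij_def finite_UNIV_inj_surj)
qed

theorem mainTheorem4:
  fixes F G :: "'a::{field,finite} \<Rightarrow> 'a"
    and A11 A21 A22 :: "'a \<Rightarrow> 'a"
    and C D :: 'a
  assumes char2: "CHAR('a) = 2"
    and lin: "f2_linear A11" "f2_linear A21" "f2_linear A22"
    and bijA: "bij (\<lambda>(x, y). (A11 x + C, A21 x + A22 y + D))"
    and graph: "{(x, G x) | x. True} = (\<lambda>(x, y). (A11 x + C, A21 x + A22 y + D)) ` {(x, F x) | x. True}"
  shows "(\<forall>a b c. LBCT F a b c = LBCT G (A11 a) (A11 b) (A22 c + A21 b))
       \<and> bij (\<lambda>(a, b, c). (A11 a, A11 b, A22 c + A21 b))"
proof -
  have "bij A11"
    using bij_lower_triangular_imp_surj[OF bijA] by (simp add: bij_def finite_UNIV_surj_inj)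
  have "inj A22"
    using bij_lower_triangular_imp_inj[OF bijA] .
  have G_EA: "(\<lambda>x. G (A11 x + C)) = (\<lambda>x. A22 (F x) + A21 x + D)"
  proof
    fix x
    have "(x, F x) \<in> {(x, F x) | x. True}"
      by blast
    then have "(A11 x + C, A21 x + A22 (F x) + D) \<in> {(x, G x) | x. True}"
      unfolding graph by (rule rev_image_eqI) simp
    then show "G (A11 x + C) = A22 (F x) + A21 x + D"
      by (simp add: add_ac)
  qed
  have "LBCT F a b c = LBCT G (A11 a) (A11 b) (A22 c + A21 b)" for a b c
  proof -
    have "LBCT F a b c = LBCT (\<lambda>x. A22 (F x) + A21 x + D) a b (A22 c + A21 b)"
      using LBCT_affine_output[OF char2 lin(3) \<open>inj A22\<close> lin(2)] by simp
    also have "\<dots> = LBCT (\<lambda>x. G (A11 x + C)) a b (A22 c + A21 b)"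
      by (simp only: G_EA)
    also have "\<dots> = LBCT G (A11 a) (A11 b) (A22 c + A21 b)"
      by (rule LBCT_comp_affine[OF char2 lin(1) \<open>bij A11\<close>])
    finally show ?thesis .
  qed
  then show ?thesis
    using bij_triangular_triple[OF bij_is_inj[OF \<open>bij A11\<close>] \<open>inj A22\<close>] by blast
qed

end
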